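(* Let $f:[0,1]\times\mathbb{R}\to\mathbb{R}$ be continuous and suppose there exist positive constants $A,B$ with $A<\pi^2$ such that $|f(t,x)|\leqslant A|x|+B$ for all $t\in[0,1]$, $x\in\mathbb{R}$. Fix $y\in L^2(0,1)$. Then the functional $\varphi:\mathbb{X}\to\mathbb{R}$, $\varphi(x)=\frac12\int_0^1|\ddot x(t)-f(t,x(t))-y(t)|^2dt$, is coercive, i.e. $\varphi(x)\to\infty$ as $\|x\|_{\mathbb{X}}\to\infty$.
   Context: $\mathbb{X}=H^2(0,1)\cap H^1_0(0,1)$ (functions $x$ on $[0,1]$ with $x,\dot x$ absolutely continuous, $\ddot x\in L^2(0,1)$, $x(0)=x(1)=0$), with norm $\|x\|_{\mathbb{X}}=\|\ddot x\|_{L^2}$. *)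

theory Defs
  imports "HOL-Analysis.Analysis"
begin

definition L2_01 :: "(real \<Rightarrow> real) \<Rightarrow> bool" where
  "L2_01 g \<longleftrightarrow> set_borel_measurable lborel {0..1} g \<and>
                set_integrable lborel {0..1} (\<lambda>t. (g t)\<^sup>2)"

text \<open>x belongs to X = H^2(0,1) \<inter> H^1_0(0,1), with first derivative xd and second
  derivative xdd: xd and x are absolutely continuous on [0,1] (indefinite integrals of their
  derivatives), the second derivative is in L^2, and x(0) = x(1) = 0.\<close>
definition in_X :: "(real \<Rightarrow> real) \<Rightarrow> (real \<Rightarrow> real) \<Rightarrow> (real \<Rightarrow> real) \<Rightarrow> bool" where
  "in_X x xd xdd \<longleftrightarrow>
     L2_01 xdd \<and>
     (\<forall>t\<in>{0..1}. xd t = xd 0 + (LBINT s=0..t. xdd s)) \<and>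
     (\<forall>t\<in>{0..1}. x t = x 0 + (LBINT s=0..t. xd s)) \<and>
     x 0 = 0 \<and> x 1 = 0"

definition normX :: "(real \<Rightarrow> real) \<Rightarrow> real" where
  "normX xdd = sqrt (LBINT t=0..1. (xdd t)\<^sup>2)"

definition phi :: "(real \<Rightarrow> real \<Rightarrow> real) \<Rightarrow> (real \<Rightarrow> real) \<Rightarrow> (real \<Rightarrow> real) \<Rightarrow> (real \<Rightarrow> real) \<Rightarrow> real" where
  "phi f y x xdd = (1/2) * (LBINT t=0..1. \<bar>xdd t - f t (x t) - y t\<bar>\<^sup>2)"

end

theory Submission
  imports Defs
begin

text \<open>Wirtinger's inequality \<open>\<pi>\<^sup>2 \<integral> x\<^sup>2 \<le> \<integral> x'\<^sup>2\<close> and the integration by parts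
  \<open>\<integral> x'\<^sup>2 = - \<integral> x'' x \<le> (\<integral> x''\<^sup>2 / \<pi>\<^sup>2 + \<pi>\<^sup>2 \<integral> x\<^sup>2) / 2\<close> give Poincare's inequality
  \<open>\<pi>\<^sup>4 \<integral> x\<^sup>2 \<le> \<integral> x''\<^sup>2\<close> on X. Hence the growth bound makes \<open>w = f(\<cdot>, x) + y\<close> satisfy
  \<open>\<integral> w\<^sup>2 \<le> a \<integral> x''\<^sup>2 + const\<close> with \<open>a = A/\<pi>\<^sup>2 < 1\<close>, and the weighted inequality
  \<open>e (x'' - w)\<^sup>2 \<ge> e (1 - e) x''\<^sup>2 - (1 - e) w\<^sup>2\<close> with \<open>a < e < 1\<close> bounds \<open>\<phi>(x)\<close> below by a
  positive multiple of \<open>\<parallel>x\<parallel>\<^sup>2\<close> minus a constant.\<close>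

lemma L2_01_imp_set_integrable:
  assumes "L2_01 y"
  shows "set_integrable lborel {0..1} y"
proof (rule set_integrable_bound)
  show "set_integrable lborel {0..1} (\<lambda>t. 1 + (y t)\<^sup>2)"
    using assms borel_integrable_atLeastAtMost'[of 0 1 "\<lambda>_. 1::real"]
    unfolding L2_01_def by (intro set_integral_add) auto
  show "set_borel_measurable lborel {0..1} y"
    using assms unfolding L2_01_def by simp
  have "\<bar>z\<bar> \<le> 1 + z\<^sup>2" for z :: real
    using zero_le_power2[of "\<bar>z\<bar> - 1"] by (simp add: power2_eq_square algebra_simps)
  then show "AE t in lborel. t \<in> {0..1} \<longrightarrow> norm (y t) \<le> norm (1 + (y t)\<^sup>2)"
    by simp
qed

lemma integrable_lower_triangle_product:
  fixes g v :: "real \<Rightarrow> real"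
  assumes g: "integrable lborel g" and v: "integrable lborel v"
  shows "integrable (lborel \<Otimes>\<^sub>M lborel) (\<lambda>(s, t). if s \<le> t then g s * v t else 0)"
proof (rule lborel_pair.Fubini_integrable)
  have [measurable]: "g \<in> borel_measurable lborel" "v \<in> borel_measurable lborel"
    using g v by auto
  show "(\<lambda>(s, t). if s \<le> t then g s * v t else 0) \<in> borel_measurable (lborel \<Otimes>\<^sub>M lborel)"
    by measurable
  show "integrable lborel (\<lambda>s. LINT t|lborel. norm (case (s, t) of (s, t) \<Rightarrow> if s \<le> t then g s * v t else 0))"
  proof (rule Bochner_Integration.integrable_bound[where f="\<lambda>s. g s * (LINT t|lborel. \<bar>v t\<bar>)"])
    show "integrable lborel (\<lambda>s. g s * (LINT t|lborel. \<bar>v t\<bar>))"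
      using g by simp
    show "AE s in lborel. norm (LINT t|lborel. norm (case (s, t) of (s, t) \<Rightarrow> if s \<le> t then g s * v t else 0))
        \<le> norm (g s * (LINT t|lborel. \<bar>v t\<bar>))"
    proof (rule AE_I2)
      fix s :: real
      have "(LINT t|lborel. norm (if s \<le> t then g s * v t else 0)) \<le> (LINT t|lborel. \<bar>g s\<bar> * \<bar>v t\<bar>)"
        by (rule integral_mono') (auto simp: abs_mult v)
      then show "norm (LINT t|lborel. norm (case (s, t) of (s, t) \<Rightarrow> if s \<le> t then g s * v t else 0))
          \<le> norm (g s * (LINT t|lborel. \<bar>v t\<bar>))"
        by (simp add: abs_mult integral_nonneg_AE)
    qed
  qed (measurable)
  show "AE s in lborel. integrable lborel (\<lambda>t. case (s, t) of (s, t) \<Rightarrow> if s \<le> t then g s * v t else 0)"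
    by (intro AE_I2, rule Bochner_Integration.integrable_bound[where f="\<lambda>t. g s * v t" for s])
       (auto simp: v)
qed

lemma set_integral_tail_eq_neg:
  fixes u v :: "real \<Rightarrow> real"
  assumes vc: "continuous_on {0..1} v"
    and u: "\<And>t. t \<in> {0..1} \<Longrightarrow> u t = u 0 + (LBINT s=0..t. v s)"
    and u1: "u 1 = 0" and s: "s \<in> {0..1}"
  shows "(LBINT t:{s..1}. v t) = - u s"
proof -
  have "interval_lebesgue_integrable lborel 0 1 v"
    using interval_integrable_continuous_on[of 0 1 v] vc by (simp add: zero_ereal_def one_ereal_def)
  then have "(LBINT t=0..s. v t) + (LBINT t=s..1. v t) = (LBINT t=0..1. v t)"
    using s by (intro interval_integral_sum) (simp_all add: min_def max_def zero_ereal_def)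
  moreover have "(LBINT t=s..1. v t) = (LBINT t:{s..1}. v t)"
    using s interval_integral_Icc[of s 1 v] by (simp add: one_ereal_def)
  ultimately show ?thesis
    using u[OF s] u[of 1] u1 by (simp add: one_ereal_def)
qed

text \<open>Since g is merely integrable, the integration by parts theorems of the library do not
  apply; instead both sides are the iterated integrals of \<open>g(s) v(t)\<close> over the triangle
  \<open>0 \<le> s \<le> t \<le> 1\<close>, taken in the two orders.\<close>

lemma set_integral_sq_deriv_by_parts:
  fixes g v u :: "real \<Rightarrow> real"
  assumes gI: "set_integrable lborel {0..1} g"
    and vc: "continuous_on {0..1} v"
    and v: "\<And>t. t \<in> {0..1} \<Longrightarrow> v t = v 0 + (LBINT s:{0..t}. g s)"
    and u: "\<And>t. t \<in> {0..1} \<Longrightarrow> u t = u 0 + (LBINT s=0..t. v s)"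
    and u0: "u 0 = 0" and u1: "u 1 = 0"
  shows "(LBINT t:{0..1}. v t * v t) = - (LBINT s:{0..1}. g s * u s)"
proof -
  define gi where "gi s = indicator {0..1} s * g s" for s :: real
  define vi where "vi t = indicator {0..1} t * v t" for t :: real
  define H where "H s t = (if s \<le> t then gi s * vi t else 0)" for s t :: real
  have gi_int: "integrable lborel gi"
    using gI unfolding set_integrable_def gi_def by simp
  have vi_int: "integrable lborel vi"
    using borel_integrable_atLeastAtMost'[OF vc] unfolding set_integrable_def vi_def by simp
  have tail: "(LBINT t:{s..1}. v t) = - u s" if "s \<in> {0..1}" for s
    using set_integral_tail_eq_neg[OF vc u u1 that] .
  have "(LINT t|lborel. LINT s|lborel. H s t) = (LINT s|lborel. LINT t|lborel. H s t)"
    using lborel_pair.Fubini_integral[OF integrable_lower_triangle_product[OF gi_int vi_int]]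
    unfolding H_def by simp
  moreover have "(LINT s|lborel. H s t) = vi t * (v t - v 0)" for t
  proof -
    have "H s t = vi t * (indicator {0..t} s * g s)" for s
      by (auto simp: H_def gi_def vi_def split: split_indicator)
    then have "(LINT s|lborel. H s t) = vi t * (LBINT s:{0..t}. g s)"
      unfolding set_lebesgue_integral_def by simp
    then show ?thesis
      using v[of t] by (cases "t \<in> {0..1}") (simp_all add: vi_def)
  qed
  moreover have "(LINT t|lborel. H s t) = - (gi s * u s)" for s
  proof -
    have "H s t = gi s * (indicator {s..1} t * v t)" for t
      by (auto simp: H_def gi_def vi_def split: split_indicator)
    then have "(LINT t|lborel. H s t) = gi s * (LBINT t:{s..1}. v t)"
      unfolding set_lebesgue_integral_def by simp
    then show ?thesis
      using tail[of s] by (cases "s \<in> {0..1}") (simp_all add: gi_def)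
  qed
  moreover have "integrable lborel (\<lambda>t. indicator {0..1} t * (v t * v t))"
    using borel_integrable_atLeastAtMost'[of 0 1 "\<lambda>t. v t * v t"] vc
    unfolding set_integrable_def by (auto intro!: continuous_intros)
  moreover have "(LINT t|lborel. vi t) = 0"
    using tail[of 0] u0 unfolding vi_def set_lebesgue_integral_def by simp
  moreover have "(\<lambda>t. vi t * (v t - v 0)) = (\<lambda>t. indicator {0..1} t * (v t * v t) - v 0 * vi t)"
    by (auto simp: vi_def algebra_simps)
  ultimately show ?thesis
    using vi_int unfolding set_lebesgue_integral_def gi_def by (simp add: mult.assoc)
qed

lemma cot_mult_sq_tendsto_0:
  fixes u :: "real \<Rightarrow> real"
  assumes du: "(u has_real_derivative d) (at c within S)"
    and uc: "u c = 0" and sc: "sin (pi * c) = 0" and cc: "cos (pi * c) \<noteq> 0"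
  shows "((\<lambda>y. cos (pi * y) / sin (pi * y) * (u y)\<^sup>2) \<longlongrightarrow> 0) (at c within S)"
proof -
  have "((\<lambda>y. (u y - u c) / (y - c)) \<longlongrightarrow> d) (at c within S)"
    using du by (simp add: has_field_derivative_iff)
  moreover have "((\<lambda>y. sin (pi * y)) has_real_derivative pi * cos (pi * c)) (at c within S)"
    by (auto intro!: derivative_eq_intros)
  then have "((\<lambda>y. (sin (pi * y) - sin (pi * c)) / (y - c)) \<longlongrightarrow> pi * cos (pi * c)) (at c within S)"
    by (simp add: has_field_derivative_iff)
  ultimately have "((\<lambda>y. ((u y - u c) / (y - c)) / ((sin (pi * y) - sin (pi * c)) / (y - c)))
      \<longlongrightarrow> d / (pi * cos (pi * c))) (at c within S)"
    using cc by (intro tendsto_divide) auto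
  then have quot: "((\<lambda>y. u y / sin (pi * y)) \<longlongrightarrow> d / (pi * cos (pi * c))) (at c within S)"
    by (rule Lim_transform_eventually)
       (auto simp: eventually_at_filter uc sc intro: always_eventually)
  have u_lim: "(u \<longlongrightarrow> 0) (at c within S)"
    using DERIV_continuous[OF du] uc by (simp add: continuous_within)
  have "((\<lambda>y. cos (pi * y) * (u y / sin (pi * y)) * u y)
      \<longlongrightarrow> cos (pi * c) * (d / (pi * cos (pi * c))) * 0) (at c within S)"
    by (intro tendsto_mult quot u_lim tendsto_intros)
  then show ?thesis
    by (simp add: power2_eq_square mult.assoc)
qed

text \<open>With \<open>\<Phi>(t) = \<integral>\<^sub>0\<^sup>t (u'\<^sup>2 - \<pi>\<^sup>2 u\<^sup>2)\<close>, the function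
  \<open>\<Phi>(t) - \<pi> cot(\<pi> t) u(t)\<^sup>2\<close> has derivative \<open>(u' - \<pi> cot(\<pi> t) u)\<^sup>2 \<ge> 0\<close> on (0,1), and the
  cotangent term vanishes at both ends because u does.\<close>

lemma wirtinger_inequality:
  fixes u v :: "real \<Rightarrow> real"
  assumes vc: "continuous_on {0..1} v"
    and ud: "\<And>t. t \<in> {0..1} \<Longrightarrow> (u has_real_derivative v t) (at t within {0..1})"
    and u0: "u 0 = 0" and u1: "u 1 = 0"
  shows "pi\<^sup>2 * (LBINT t:{0..1}. (u t)\<^sup>2) \<le> (LBINT t:{0..1}. (v t)\<^sup>2)"
proof -
  have uc: "continuous_on {0..1} u"
    unfolding continuous_on_eq_continuous_within using ud by (blast intro: DERIV_continuous)
  define w where "w t = (v t)\<^sup>2 - pi\<^sup>2 * (u t)\<^sup>2" for t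
  define \<Phi> where "\<Phi> t = (LBINT s=0..t. w s)" for t :: real
  define F where "F t = \<Phi> t - pi * (cos (pi * t) / sin (pi * t) * (u t)\<^sup>2)" for t
  have wc: "continuous_on {0..1} w"
    unfolding w_def by (intro continuous_intros vc uc)
  have d\<Phi>: "(\<Phi> has_real_derivative w t) (at t within {0..1})" if "t \<in> {0..1}" for t
    using interval_integral_FTC2[of 0 0 1 w t] wc that
    unfolding \<Phi>_def has_real_derivative_iff_has_vector_derivative by (simp add: zero_ereal_def)
  have \<Phi>c: "continuous_on {0..1} \<Phi>"
    unfolding continuous_on_eq_continuous_within using d\<Phi> by (blast intro: DERIV_continuous)
  have dF: "(F has_real_derivative (v t - pi * (cos (pi * t) / sin (pi * t)) * u t)\<^sup>2) (at t)"
    if "0 < t" "t < 1" for t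
  proof -
    have at: "at t within {0..1} = at t" using that by (simp add: at_within_Icc_at)
    have "sin (pi * t) \<noteq> 0"
      using sin_gt_zero[of "pi * t"] that by simp
    with d\<Phi>[of t] ud[of t] show ?thesis
      unfolding F_def using that at
      by (auto intro!: derivative_eq_intros simp: w_def field_simps power2_eq_square)
  qed
  have mono: "F a \<le> F b" if "0 < a" "a \<le> b" "b < 1" for a b
    using that dF by (intro DERIV_nonneg_imp_nondecreasing[OF \<open>a \<le> b\<close>])
      (meson order_less_le_trans order_le_less_trans zero_le_power2)
  have cot0: "((\<lambda>y. cos (pi * y) / sin (pi * y) * (u y)\<^sup>2) \<longlongrightarrow> 0) (at c within {0..1})"
    if "c \<in> {0, 1}" for c
    using that by (intro cot_mult_sq_tendsto_0[OF ud[of c]]) (auto simp: u0 u1)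
  have "((\<lambda>y. \<Phi> y - pi * (cos (pi * y) / sin (pi * y) * (u y)\<^sup>2)) \<longlongrightarrow> \<Phi> 0 - pi * 0) (at_right 0)"
    using continuous_on_Icc_at_rightD[OF \<Phi>c] cot0[of 0]
    unfolding at_within_Icc_at_right[OF zero_less_one] by (intro tendsto_intros) auto
  moreover have "\<Phi> 0 = 0"
    by (simp add: \<Phi>_def zero_ereal_def)
  ultimately have lim0: "(F \<longlongrightarrow> 0) (at_right 0)"
    by (simp add: F_def[abs_def])
  have "((\<lambda>y. \<Phi> y - pi * (cos (pi * y) / sin (pi * y) * (u y)\<^sup>2)) \<longlongrightarrow> \<Phi> 1 - pi * 0) (at_left 1)"
    using continuous_on_Icc_at_leftD[OF \<Phi>c] cot0[of 1]
    unfolding at_within_Icc_at_left[OF zero_less_one] by (intro tendsto_intros) auto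
  then have lim1: "(F \<longlongrightarrow> \<Phi> 1) (at_left 1)"
    by (simp add: F_def[abs_def])
  have F_nonneg: "0 \<le> F b" if "0 < b" "b < 1" for b
    using that mono
    by (intro tendsto_le[OF _ tendsto_const lim0]) (auto simp: eventually_at_right_field intro!: exI[of _ b])
  have "0 \<le> \<Phi> 1"
    using F_nonneg
    by (intro tendsto_le[OF _ lim1 tendsto_const]) (auto simp: eventually_at_left_field intro!: exI[of _ 0])
  moreover have "set_integrable lborel {0..1} (\<lambda>t. (u t)\<^sup>2)" "set_integrable lborel {0..1} (\<lambda>t. (v t)\<^sup>2)"
    using uc vc by (auto intro!: borel_integrable_atLeastAtMost' continuous_intros)
  then have "\<Phi> 1 = (LBINT t:{0..1}. (v t)\<^sup>2) - pi\<^sup>2 * (LBINT t:{0..1}. (u t)\<^sup>2)"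
    using interval_integral_Icc[of 0 1 w] unfolding \<Phi>_def w_def
    by (simp add: set_integral_diff set_integral_mult_right zero_ereal_def one_ereal_def)
  ultimately show ?thesis by simp
qed

lemma in_X_derivatives:
  assumes X: "in_X x xd xdd"
  shows in_X_continuous_deriv: "continuous_on {0..1} xd"
    and in_X_has_derivative: "\<And>t. t \<in> {0..1} \<Longrightarrow> (x has_real_derivative xd t) (at t within {0..1})"
    and in_X_continuous: "continuous_on {0..1} x"
proof -
  have gI: "set_integrable lborel {0..1} xdd"
    and xd: "\<And>t. t \<in> {0..1} \<Longrightarrow> xd t = xd 0 + (LBINT s=0..t. xdd s)"
    and x: "\<And>t. t \<in> {0..1} \<Longrightarrow> x t = x 0 + (LBINT s=0..t. xd s)"
    using X L2_01_imp_set_integrable unfolding in_X_def by blast+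
  show vc: "continuous_on {0..1} xd"
  proof (rule continuous_on_eq)
    show "continuous_on {0..1} (\<lambda>t. xd 0 + integral {0..t} xdd)"
      by (intro continuous_intros indefinite_integral_continuous_1 set_borel_integral_eq_integral(1)[OF gI])
    fix t :: real assume t: "t \<in> {0..1}"
    have "set_integrable lborel {0..t} xdd"
      by (rule set_integrable_subset[OF gI]) (use t in auto)
    then show "xd 0 + integral {0..t} xdd = xd t"
      using xd[OF t] t interval_integral_Icc[of 0 t xdd]
      by (simp add: zero_ereal_def set_borel_integral_eq_integral(2))
  qed
  show "(x has_real_derivative xd t) (at t within {0..1})" if t: "t \<in> {0..1}" for t
  proof -
    have "((\<lambda>s. x 0 + (LBINT r=0..s. xd r)) has_vector_derivative xd t) (at t within {0..1})"
      using interval_integral_FTC2[of 0 0 1 xd t] vc t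
      by (auto simp: zero_ereal_def intro!: derivative_eq_intros)
    then have "(x has_vector_derivative xd t) (at t within {0..1})"
      by (rule has_vector_derivative_transform[OF t, rotated]) (use x in blast)
    then show ?thesis
      by (simp add: has_real_derivative_iff_has_vector_derivative)
  qed
  then show "continuous_on {0..1} x"
    unfolding continuous_on_eq_continuous_within by (blast intro: DERIV_continuous)
qed

lemma in_X_poincare:
  assumes X: "in_X x xd xdd"
  shows "pi ^ 4 * (LBINT t:{0..1}. (x t)\<^sup>2) \<le> (LBINT t:{0..1}. (xdd t)\<^sup>2)"
proof -
  have gI: "set_integrable lborel {0..1} xdd"
    and gsq: "set_integrable lborel {0..1} (\<lambda>t. (xdd t)\<^sup>2)"
    using X L2_01_imp_set_integrable unfolding in_X_def L2_01_def by blast+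
  have usq: "set_integrable lborel {0..1} (\<lambda>t. (x t)\<^sup>2)"
    using in_X_continuous[OF X] by (intro borel_integrable_atLeastAtMost' continuous_intros)
  have x01: "x 0 = 0" "x 1 = 0"
    and x: "\<And>t. t \<in> {0..1} \<Longrightarrow> x t = x 0 + (LBINT s=0..t. xd s)"
    and xd: "\<And>t. t \<in> {0..1} \<Longrightarrow> xd t = xd 0 + (LBINT s=0..t. xdd s)"
    using X unfolding in_X_def by blast+
  have "xd t = xd 0 + (LBINT s:{0..t}. xdd s)" if "t \<in> {0..1}" for t
    using xd[OF that] that interval_integral_Icc[of 0 t xdd] by (simp add: zero_ereal_def)
  from set_integral_sq_deriv_by_parts[OF gI in_X_continuous_deriv[OF X] this x x01]
  have by_parts: "(LBINT t:{0..1}. (xd t)\<^sup>2) = (LBINT t:{0..1}. - (xdd t * x t))"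
    by (simp add: power2_eq_square set_lebesgue_integral_def)
  have am_gm: "- (xdd t * x t) \<le> ((xdd t)\<^sup>2 / pi\<^sup>2 + pi\<^sup>2 * (x t)\<^sup>2) / 2" for t
    using zero_le_power2[of "xdd t / pi + pi * x t"] by (simp add: power2_eq_square field_simps)
  have "set_integrable lborel {0..1} (\<lambda>t. ((xdd t)\<^sup>2 / pi\<^sup>2 + pi\<^sup>2 * (x t)\<^sup>2) / 2)"
    using gsq usq by auto
  \<comment> \<open>\<open>integral_mono'\<close> spares us proving that \<open>x'' x\<close> is integrable\<close>
  then have "(LBINT t:{0..1}. - (xdd t * x t))
      \<le> (LBINT t:{0..1}. ((xdd t)\<^sup>2 / pi\<^sup>2 + pi\<^sup>2 * (x t)\<^sup>2) / 2)"
    unfolding set_lebesgue_integral_def set_integrable_def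
    by (rule integral_mono') (use am_gm in \<open>auto simp: indicator_def\<close>)
  also have "\<dots> = ((LBINT t:{0..1}. (xdd t)\<^sup>2) / pi\<^sup>2 + pi\<^sup>2 * (LBINT t:{0..1}. (x t)\<^sup>2)) / 2"
    using gsq usq by (simp add: set_integral_divide_zero)
  finally have "pi\<^sup>2 * (LBINT t:{0..1}. (x t)\<^sup>2)
      \<le> ((LBINT t:{0..1}. (xdd t)\<^sup>2) / pi\<^sup>2 + pi\<^sup>2 * (LBINT t:{0..1}. (x t)\<^sup>2)) / 2"
    using wirtinger_inequality[OF in_X_continuous_deriv[OF X] in_X_has_derivative[OF X] x01] by_parts
    by simp
  then show ?thesis
    by (simp add: field_simps power_numeral_reduce)
qed

lemma weighted_sq_diff_lower:
  fixes e g w :: real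
  shows "e * (1 - e) * g\<^sup>2 - (1 - e) * w\<^sup>2 \<le> e * (g - w)\<^sup>2"
proof -
  have "e * (g - w)\<^sup>2 - (e * (1 - e) * g\<^sup>2 - (1 - e) * w\<^sup>2) = (e * g - w)\<^sup>2"
    by (simp add: power2_eq_square algebra_simps)
  then show ?thesis
    using zero_le_power2[of "e * g - w"] by linarith
qed

lemma sq_add_le_weighted:
  fixes a p q :: real
  assumes "0 < a" "a < 1"
  shows "(p + q)\<^sup>2 \<le> p\<^sup>2 / a + q\<^sup>2 / (1 - a)"
proof -
  have "p\<^sup>2 / a + q\<^sup>2 / (1 - a) - (p + q)\<^sup>2 = ((1 - a) * p - a * q)\<^sup>2 / (a * (1 - a))"
    using assms by (simp add: field_simps power2_eq_square)
  moreover have "0 \<le> ((1 - a) * p - a * q)\<^sup>2 / (a * (1 - a))"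
    using assms by simp
  ultimately show ?thesis by linarith
qed

lemma set_integral_weighted_sq_diff_lower:
  fixes g w :: "'a \<Rightarrow> real"
  assumes S: "S \<in> sets M"
    and gm: "set_borel_measurable M S g" and gI: "set_integrable M S (\<lambda>t. (g t)\<^sup>2)"
    and wm: "set_borel_measurable M S w" and wI: "set_integrable M S (\<lambda>t. (w t)\<^sup>2)"
  shows "set_integrable M S (\<lambda>t. (g t - w t)\<^sup>2)"
    and "e * (1 - e) * (LINT t:S|M. (g t)\<^sup>2) - (1 - e) * (LINT t:S|M. (w t)\<^sup>2)
      \<le> e * (LINT t:S|M. (g t - w t)\<^sup>2)"
proof -
  have restrict: "set_borel_measurable M S h \<longleftrightarrow> h \<in> borel_measurable (restrict_space M S)" for h :: "'a \<Rightarrow> real"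
    using S by (simp add: set_borel_measurable_def borel_measurable_restrict_space_iff)
  show hI: "set_integrable M S (\<lambda>t. (g t - w t)\<^sup>2)"
  proof (rule set_integrable_bound)
    show "set_integrable M S (\<lambda>t. 2 * (g t)\<^sup>2 + 2 * (w t)\<^sup>2)"
      using gI wI by auto
    show "set_borel_measurable M S (\<lambda>t. (g t - w t)\<^sup>2)"
      using gm wm unfolding restrict by measurable
    have "(p - q)\<^sup>2 \<le> 2 * p\<^sup>2 + 2 * q\<^sup>2" for p q :: real
      using zero_le_power2[of "p + q"] by (simp add: power2_eq_square algebra_simps)
    then show "AE t in M. t \<in> S \<longrightarrow> norm ((g t - w t)\<^sup>2) \<le> norm (2 * (g t)\<^sup>2 + 2 * (w t)\<^sup>2)"
      by simp
  qed
  have "(LINT t:S|M. e * (1 - e) * (g t)\<^sup>2 - (1 - e) * (w t)\<^sup>2) \<le> (LINT t:S|M. e * (g t - w t)\<^sup>2)"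
    using gI wI hI weighted_sq_diff_lower by (intro set_integral_mono) auto
  then show "e * (1 - e) * (LINT t:S|M. (g t)\<^sup>2) - (1 - e) * (LINT t:S|M. (w t)\<^sup>2)
      \<le> e * (LINT t:S|M. (g t - w t)\<^sup>2)"
    using gI wI by simp
qed

lemma set_integral_sq_le_of_affine_bound:
  fixes u b w :: "'a \<Rightarrow> real"
  assumes wm: "set_borel_measurable M S w"
    and uI: "set_integrable M S (\<lambda>t. (u t)\<^sup>2)" and bI: "set_integrable M S (\<lambda>t. (b t)\<^sup>2)"
    and bound: "\<And>t. t \<in> S \<Longrightarrow> \<bar>w t\<bar> \<le> A * \<bar>u t\<bar> + b t"
    and a: "0 < a" "a < 1"
  shows "set_integrable M S (\<lambda>t. (w t)\<^sup>2)"
    and "(LINT t:S|M. (w t)\<^sup>2) \<le> A\<^sup>2 / a * (LINT t:S|M. (u t)\<^sup>2) + (LINT t:S|M. (b t)\<^sup>2) / (1 - a)"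
proof -
  have pointwise: "(w t)\<^sup>2 \<le> A\<^sup>2 / a * (u t)\<^sup>2 + (b t)\<^sup>2 / (1 - a)" if "t \<in> S" for t
  proof -
    have "(w t)\<^sup>2 \<le> (A * \<bar>u t\<bar> + b t)\<^sup>2"
      using bound[OF that] by (metis abs_ge_zero abs_le_square_iff abs_of_nonneg order_trans)
    also have "\<dots> \<le> (A * \<bar>u t\<bar>)\<^sup>2 / a + (b t)\<^sup>2 / (1 - a)"
      by (rule sq_add_le_weighted[OF a])
    finally show ?thesis
      by (simp add: power_mult_distrib)
  qed
  have majorant: "set_integrable M S (\<lambda>t. A\<^sup>2 / a * (u t)\<^sup>2 + (b t)\<^sup>2 / (1 - a))"
    using uI bI by auto
  show wI: "set_integrable M S (\<lambda>t. (w t)\<^sup>2)"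
  proof (rule set_integrable_bound[OF majorant])
    have "(\<lambda>t. (indicator S t *\<^sub>R w t)\<^sup>2) = (\<lambda>t. indicator S t *\<^sub>R (w t)\<^sup>2)"
      by (auto simp: indicator_def)
    then show "set_borel_measurable M S (\<lambda>t. (w t)\<^sup>2)"
      using borel_measurable_power[OF wm[unfolded set_borel_measurable_def], of 2]
      unfolding set_borel_measurable_def by simp
    show "AE t in M. t \<in> S \<longrightarrow> norm ((w t)\<^sup>2) \<le> norm (A\<^sup>2 / a * (u t)\<^sup>2 + (b t)\<^sup>2 / (1 - a))"
      using pointwise by (auto intro: order_trans[OF _ abs_ge_self])
  qed
  have "(LINT t:S|M. (w t)\<^sup>2) \<le> (LINT t:S|M. A\<^sup>2 / a * (u t)\<^sup>2 + (b t)\<^sup>2 / (1 - a))"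
    using set_integral_mono[OF wI majorant pointwise] .
  then show "(LINT t:S|M. (w t)\<^sup>2) \<le> A\<^sup>2 / a * (LINT t:S|M. (u t)\<^sup>2) + (LINT t:S|M. (b t)\<^sup>2) / (1 - a)"
    using uI bI by (simp add: set_integral_divide_zero)
qed

lemma normX_sq: "(normX xdd)\<^sup>2 = (LBINT t:{0..1}. (xdd t)\<^sup>2)"
proof -
  have "0 \<le> (LBINT t:{0..1}. (xdd t)\<^sup>2)"
    unfolding set_lebesgue_integral_def by (intro integral_nonneg_AE) auto
  then show ?thesis
    using interval_integral_Icc[of 0 1 "\<lambda>t. (xdd t)\<^sup>2"]
    unfolding normX_def by (simp add: zero_ereal_def one_ereal_def)
qed

lemma phi_eq_set_integral:
  "phi f y x xdd = (LBINT t:{0..1}. (xdd t - (f t (x t) + y t))\<^sup>2) / 2"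
  using interval_integral_Icc[of 0 1 "\<lambda>t. (xdd t - (f t (x t) + y t))\<^sup>2"]
  unfolding phi_def by (simp add: zero_ereal_def one_ereal_def algebra_simps)

lemma in_X_superposition_sq_bound:
  fixes f :: "real \<Rightarrow> real \<Rightarrow> real" and y :: "real \<Rightarrow> real" and A B :: real
  assumes fc: "continuous_on ({0..1} \<times> UNIV) (\<lambda>(t, x). f t x)"
    and A: "0 < A" "A < pi\<^sup>2"
    and fb: "\<And>t x. t \<in> {0..1} \<Longrightarrow> \<bar>f t x\<bar> \<le> A * \<bar>x\<bar> + B"
    and yL: "L2_01 y" and X: "in_X x xd xdd"
  shows "set_borel_measurable lborel {0..1} (\<lambda>t. f t (x t) + y t)"
    and "set_integrable lborel {0..1} (\<lambda>t. (f t (x t) + y t)\<^sup>2)"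
    and "(LBINT t:{0..1}. (f t (x t) + y t)\<^sup>2)
      \<le> A / pi\<^sup>2 * (LBINT t:{0..1}. (xdd t)\<^sup>2) + (LBINT t:{0..1}. (B + \<bar>y t\<bar>)\<^sup>2) / (1 - A / pi\<^sup>2)"
proof -
  define a where "a = A / pi\<^sup>2"
  have a: "0 < a" "a < 1"
    using A by (auto simp: a_def field_simps)
  have ym: "set_borel_measurable lborel {0..1} y" and ysq: "set_integrable lborel {0..1} (\<lambda>t. (y t)\<^sup>2)"
    using yL unfolding L2_01_def by auto
  have bI: "set_integrable lborel {0..1} (\<lambda>t. (B + \<bar>y t\<bar>)\<^sup>2)"
    using ysq set_integrable_abs[OF L2_01_imp_set_integrable[OF yL]]
      borel_integrable_atLeastAtMost'[of 0 1 "\<lambda>_. B\<^sup>2"]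
    by (auto simp: power2_sum intro!: set_integral_add set_integrable_mult_right)
  have usq: "set_integrable lborel {0..1} (\<lambda>t. (x t)\<^sup>2)"
    using in_X_continuous[OF X] by (intro borel_integrable_atLeastAtMost' continuous_intros)
  have "continuous_on {0..1} ((\<lambda>(t, x). f t x) \<circ> (\<lambda>t. (t, x t)))"
    by (rule continuous_on_compose[OF _ continuous_on_subset[OF fc]])
       (auto intro!: continuous_intros in_X_continuous[OF X])
  then have "(\<lambda>t. indicator {0..1} t *\<^sub>R f t (x t)) \<in> borel_measurable lborel"
    using borel_measurable_continuous_on_indicator[of "{0..1}" "\<lambda>t. f t (x t)"] by (simp add: o_def)
  then show wm: "set_borel_measurable lborel {0..1} (\<lambda>t. f t (x t) + y t)"
    using ym unfolding set_borel_measurable_def by (simp add: distrib_left borel_measurable_add)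
  have "\<bar>f t (x t) + y t\<bar> \<le> A * \<bar>x t\<bar> + (B + \<bar>y t\<bar>)" if "t \<in> {0..1}" for t
    using fb[OF that, of "x t"] by linarith
  note affine = set_integral_sq_le_of_affine_bound[OF wm usq bI this a]
  then show "set_integrable lborel {0..1} (\<lambda>t. (f t (x t) + y t)\<^sup>2)"
    by blast
  have "A\<^sup>2 / a * (LBINT t:{0..1}. (x t)\<^sup>2) = a * (pi ^ 4 * (LBINT t:{0..1}. (x t)\<^sup>2))"
    using A by (simp add: a_def field_simps power2_eq_square power4_eq_xxxx)
  also have "\<dots> \<le> a * (LBINT t:{0..1}. (xdd t)\<^sup>2)"
    using in_X_poincare[OF X] a by (intro mult_left_mono) auto
  finally show "(LBINT t:{0..1}. (f t (x t) + y t)\<^sup>2)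
      \<le> A / pi\<^sup>2 * (LBINT t:{0..1}. (xdd t)\<^sup>2) + (LBINT t:{0..1}. (B + \<bar>y t\<bar>)\<^sup>2) / (1 - A / pi\<^sup>2)"
    using affine(2) unfolding a_def by linarith
qed

lemma phi_quadratic_lower_bound:
  fixes f :: "real \<Rightarrow> real \<Rightarrow> real" and y :: "real \<Rightarrow> real" and A B :: real
  assumes fc: "continuous_on ({0..1} \<times> UNIV) (\<lambda>(t, x). f t x)"
    and A: "0 < A" "A < pi\<^sup>2"
    and fb: "\<And>t x. t \<in> {0..1} \<Longrightarrow> \<bar>f t x\<bar> \<le> A * \<bar>x\<bar> + B"
    and yL: "L2_01 y"
  shows "\<exists>c>0. \<exists>C. \<forall>x xd xdd. in_X x xd xdd \<longrightarrow> c * (normX xdd)\<^sup>2 - C \<le> phi f y x xdd"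
proof -
  define a where "a = A / pi\<^sup>2"
  define e where "e = (1 + a) / 2"
  define Q where "Q = (LBINT t:{0..1}. (B + \<bar>y t\<bar>)\<^sup>2)"
  have a: "0 < a" "a < 1"
    using A by (auto simp: a_def field_simps)
  have e: "0 < e" "a < e" "e < 1"
    using a by (auto simp: e_def)
  have "(1 - e) * (e - a) / (2 * e) * (normX xdd)\<^sup>2 - (1 - e) * Q / (2 * e * (1 - a)) \<le> phi f y x xdd"
    if X: "in_X x xd xdd" for x xd xdd
  proof -
    define G where "G = (LBINT t:{0..1}. (xdd t)\<^sup>2)"
    define W where "W = (LBINT t:{0..1}. (f t (x t) + y t)\<^sup>2)"
    note w = in_X_superposition_sq_bound[OF fc A fb yL X]
    have "set_borel_measurable lborel {0..1} xdd" "set_integrable lborel {0..1} (\<lambda>t. (xdd t)\<^sup>2)"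
      using X unfolding in_X_def L2_01_def by auto
    from set_integral_weighted_sq_diff_lower(2)[OF _ this w(1,2), of e]
    have "e * (1 - e) * G - (1 - e) * W \<le> 2 * e * phi f y x xdd"
      unfolding G_def W_def phi_eq_set_integral by simp
    moreover have "(1 - e) * W \<le> (1 - e) * (a * G + Q / (1 - a))"
      using w(3) e unfolding G_def W_def Q_def a_def by (intro mult_left_mono) auto
    moreover have "e * (1 - e) * G - (1 - e) * (a * G + Q / (1 - a))
        = (1 - e) * (e - a) * G - (1 - e) * Q / (1 - a)"
      by (simp add: algebra_simps)
    ultimately have "(1 - e) * (e - a) * G - (1 - e) * Q / (1 - a) \<le> 2 * e * phi f y x xdd"
      by linarith
    then have "((1 - e) * (e - a) * G - (1 - e) * Q / (1 - a)) / (2 * e) \<le> phi f y x xdd"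
      using e by (simp add: pos_divide_le_eq mult.commute)
    moreover have "(1 - e) * (e - a) / (2 * e) * G - (1 - e) * Q / (2 * e * (1 - a))
        = ((1 - e) * (e - a) * G - (1 - e) * Q / (1 - a)) / (2 * e)"
      using e a by (simp add: field_simps)
    ultimately show ?thesis
      unfolding normX_sq G_def by simp
  qed
  moreover have "0 < (1 - e) * (e - a) / (2 * e)"
    using e by simp
  ultimately show ?thesis
    by blast
qed

theorem lemma4:
  fixes f :: "real \<Rightarrow> real \<Rightarrow> real" and y :: "real \<Rightarrow> real" and A B :: real
  assumes "continuous_on ({0..1} \<times> UNIV) (\<lambda>(t, x). f t x)"
    and "A > 0" and "B > 0" and "A < pi\<^sup>2"
    and "\<And>t x. t \<in> {0..1} \<Longrightarrow> \<bar>f t x\<bar> \<le> A * \<bar>x\<bar> + B"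
    and "L2_01 y"
  shows "\<forall>M. \<exists>R. \<forall>x xd xdd. in_X x xd xdd \<and> normX xdd \<ge> R \<longrightarrow> phi f y x xdd \<ge> M"
proof
  fix M :: real
  obtain c C where c: "0 < c"
    and bound: "\<And>x xd xdd. in_X x xd xdd \<Longrightarrow> c * (normX xdd)\<^sup>2 - C \<le> phi f y x xdd"
    using phi_quadratic_lower_bound[OF assms(1,2,4,5,6)] by blast
  define R where "R = sqrt (max 0 ((M + C) / c))"
  show "\<exists>R. \<forall>x xd xdd. in_X x xd xdd \<and> normX xdd \<ge> R \<longrightarrow> phi f y x xdd \<ge> M"
  proof (intro exI[of _ R] allI impI)
    fix x xd xdd
    assume H: "in_X x xd xdd \<and> R \<le> normX xdd"
    have "(M + C) / c \<le> R\<^sup>2"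
      unfolding R_def by simp
    also have "\<dots> \<le> (normX xdd)\<^sup>2"
      using H by (intro power_mono) (auto simp: R_def)
    finally have "M \<le> c * (normX xdd)\<^sup>2 - C"
      using c by (simp add: field_simps)
    with bound H show "M \<le> phi f y x xdd"
      by fastforce
  qed
qed

end
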